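(* For every semiframe $(X,\le,\ast)$, the semitopology $\mathrm{St}(X,\le,\ast)$ is sober.
   Context: A semiframe is a triple $(X,\le,\ast)$ where $(X,\le)$ is a complete join-semilattice and $\ast\subseteq X\times X$ is commutative, satisfies $x\ast x$ for every $x\neq\bot_X=\bigvee\varnothing$, and $x\ast\bigvee Y$ iff $x\ast y$ for some $y\in Y$. An abstract point is a nonempty, up-closed subset $F\subseteq X$ with $y\ast y'$ for all $y,y'\in F$ that is completely prime ($\bigvee Y\in F$ implies $y\in F$ for some $y\in Y$, for every $Y\subseteq X$ including $\varnothing$). $\mathrm{Op}(x)$ is the set of abstract points containing $x$. $\mathrm{St}(X,\le,\ast)$ is the semitopology whose points are the abstract points and whose open sets are the sets $\mathrm{Op}(x)$, $x\in X$. A semitopology is a set $\mathsf P$ with $\mathcal O\subseteq\mathcal P(\mathsf P)$ containing $\varnothing,\mathsf P$ and closed under arbitrary unions; $(\mathcal O,\subseteq,\between)$ (with $O\between O'$ iff $O\cap O'\neq\varnothing$) is a semiframe. $(\mathsf P,\mathcal O)$ is sober when the map $p\mapsto\mathrm{nbhd}(p)=\{O\in\mathcal O\mid p\in O\}$ is a bijection from $\mathsf P$ onto the set of abstract points of $(\mathcal O,\subseteq,\between)$. *)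

theory Defs
  imports Main
begin

definition abstract_point_on ::
  "'a set \<Rightarrow> ('a \<Rightarrow> 'a \<Rightarrow> bool) \<Rightarrow> ('a set \<Rightarrow> 'a) \<Rightarrow> ('a \<Rightarrow> 'a \<Rightarrow> bool) \<Rightarrow> 'a set \<Rightarrow> bool" where
  "abstract_point_on X le join ast F \<longleftrightarrow>
     F \<noteq> {} \<and> F \<subseteq> X \<and>
     (\<forall>x\<in>F. \<forall>y\<in>X. le x y \<longrightarrow> y \<in> F) \<and>
     (\<forall>y\<in>F. \<forall>y'\<in>F. ast y y') \<and>
     (\<forall>Y. Y \<subseteq> X \<longrightarrow> join Y \<in> F \<longrightarrow> (\<exists>y\<in>Y. y \<in> F))"

definition semiframe :: "('a::complete_lattice \<Rightarrow> 'a \<Rightarrow> bool) \<Rightarrow> bool" where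
  "semiframe ast \<longleftrightarrow>
     (\<forall>x y. ast x y \<longleftrightarrow> ast y x) \<and>
     (\<forall>x. x \<noteq> bot \<longrightarrow> ast x x) \<and>
     (\<forall>x Y. ast x (Sup Y) \<longleftrightarrow> (\<exists>y\<in>Y. ast x y))"

definition abstract_point :: "('a::complete_lattice \<Rightarrow> 'a \<Rightarrow> bool) \<Rightarrow> 'a set \<Rightarrow> bool" where
  "abstract_point ast F \<longleftrightarrow> abstract_point_on UNIV (\<le>) Sup ast F"

definition Op :: "('a::complete_lattice \<Rightarrow> 'a \<Rightarrow> bool) \<Rightarrow> 'a \<Rightarrow> 'a set set" where
  "Op ast x = {F. abstract_point ast F \<and> x \<in> F}"

definition St_points :: "('a::complete_lattice \<Rightarrow> 'a \<Rightarrow> bool) \<Rightarrow> 'a set set" where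
  "St_points ast = {F. abstract_point ast F}"

definition St_opens :: "('a::complete_lattice \<Rightarrow> 'a \<Rightarrow> bool) \<Rightarrow> 'a set set set" where
  "St_opens ast = range (Op ast)"

definition semitopology :: "'p set \<Rightarrow> 'p set set \<Rightarrow> bool" where
  "semitopology P Opn \<longleftrightarrow> Opn \<subseteq> Pow P \<and> {} \<in> Opn \<and> P \<in> Opn \<and> (\<forall>S. S \<subseteq> Opn \<longrightarrow> \<Union>S \<in> Opn)"

definition nbhd :: "'p set set \<Rightarrow> 'p \<Rightarrow> 'p set set" where
  "nbhd Opn p = {A \<in> Opn. p \<in> A}"

definition sober :: "'p set \<Rightarrow> 'p set set \<Rightarrow> bool" where
  "sober P Opn \<longleftrightarrow>
     bij_betw (nbhd Opn) P
       {F. abstract_point_on Opn (\<subseteq>) Union (\<lambda>A B. A \<inter> B \<noteq> {}) F}"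

end

theory Submission
  imports Defs
begin

text \<open>An abstract point F is recovered from its neighbourhood filter in St as
  {x. Op x \<in> nbhd F}, so nbhd is injective. Conversely, an abstract point P of the
  semiframe of opens of St pulls back along x \<mapsto> Op x to {x. Op x \<in> P}: this set is an
  abstract point because Op is monotone, sends joins to unions and satisfies
  Op x \<inter> Op y \<noteq> {} \<Longrightarrow> x \<ast> y. None of this uses the semiframe axioms.\<close>

lemma abstract_point_iff:
  "abstract_point ast F \<longleftrightarrow>
     F \<noteq> {} \<and> (\<forall>x\<in>F. \<forall>y. x \<le> y \<longrightarrow> y \<in> F) \<and> (\<forall>y\<in>F. \<forall>y'\<in>F. ast y y') \<and>
     (\<forall>Y. Sup Y \<in> F \<longrightarrow> (\<exists>y\<in>Y. y \<in> F))"
  unfolding abstract_point_def abstract_point_on_def by auto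

lemma Op_Sup: "Op ast (Sup Y) = \<Union> (Op ast ` Y)"
  unfolding Op_def abstract_point_iff by (auto intro: Sup_upper)

lemma Op_mono: "x \<le> y \<Longrightarrow> Op ast x \<subseteq> Op ast y"
  unfolding Op_def abstract_point_iff by auto

lemma ast_if_Op_inter_nonempty: "Op ast x \<inter> Op ast y \<noteq> {} \<Longrightarrow> ast x y"
  unfolding Op_def abstract_point_iff by auto

lemma Op_in_St_opens [simp]: "Op ast x \<in> St_opens ast"
  unfolding St_opens_def by simp

lemma Op_in_nbhd_St_iff:
  assumes "abstract_point ast F"
  shows "Op ast x \<in> nbhd (St_opens ast) F \<longleftrightarrow> x \<in> F"
proof -
  have "Op ast x \<in> nbhd (St_opens ast) F \<longleftrightarrow> F \<in> Op ast x"
    by (simp add: nbhd_def)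
  then show ?thesis
    using assms by (simp add: Op_def)
qed

lemma abstract_point_nbhd:
  assumes "A \<in> Opn" and "p \<in> A"
  shows "abstract_point_on Opn (\<subseteq>) Union (\<lambda>A B. A \<inter> B \<noteq> {}) (nbhd Opn p)"
  using assms unfolding abstract_point_on_def nbhd_def by blast

lemma inj_on_nbhd_St: "inj_on (nbhd (St_opens ast)) (St_points ast)"
proof (rule inj_onI)
  fix F G assume "F \<in> St_points ast" "G \<in> St_points ast"
    and "nbhd (St_opens ast) F = nbhd (St_opens ast) G"
  then have "x \<in> F \<longleftrightarrow> x \<in> G" for x
    using Op_in_nbhd_St_iff unfolding St_points_def by blast
  then show "F = G" by blast
qed

lemma abstract_point_St_pullback:
  assumes "abstract_point_on (St_opens ast) (\<subseteq>) Union (\<lambda>A B. A \<inter> B \<noteq> {}) P"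
  shows "abstract_point ast {x. Op ast x \<in> P}"
proof -
  from assms have P: "P \<noteq> {}" "P \<subseteq> St_opens ast"
    "\<And>A B. A \<in> P \<Longrightarrow> B \<in> St_opens ast \<Longrightarrow> A \<subseteq> B \<Longrightarrow> B \<in> P"
    "\<And>A B. A \<in> P \<Longrightarrow> B \<in> P \<Longrightarrow> A \<inter> B \<noteq> {}"
    "\<And>Y. Y \<subseteq> St_opens ast \<Longrightarrow> \<Union>Y \<in> P \<Longrightarrow> \<exists>A\<in>Y. A \<in> P"
    unfolding abstract_point_on_def by auto
  show ?thesis
    unfolding abstract_point_iff
  proof (intro conjI ballI allI impI)
    show "{x. Op ast x \<in> P} \<noteq> {}"
      using P(1,2) unfolding St_opens_def by blast
  next
    fix x y assume "x \<in> {x. Op ast x \<in> P}" "x \<le> y"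
    then show "y \<in> {x. Op ast x \<in> P}"
      using P(3) Op_mono Op_in_St_opens by blast
  next
    fix x y assume "x \<in> {x. Op ast x \<in> P}" "y \<in> {x. Op ast x \<in> P}"
    then show "ast x y"
      using P(4) ast_if_Op_inter_nonempty by blast
  next
    fix Y assume "Sup Y \<in> {x. Op ast x \<in> P}"
    then have "\<Union> (Op ast ` Y) \<in> P"
      by (simp add: Op_Sup)
    moreover have "Op ast ` Y \<subseteq> St_opens ast"
      by auto
    ultimately show "\<exists>y\<in>Y. y \<in> {x. Op ast x \<in> P}"
      using P(5) by blast
  qed
qed

lemma nbhd_St_pullback:
  assumes "abstract_point_on (St_opens ast) (\<subseteq>) Union (\<lambda>A B. A \<inter> B \<noteq> {}) P"
  shows "nbhd (St_opens ast) {x. Op ast x \<in> P} = P"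
proof
  have F: "abstract_point ast {x. Op ast x \<in> P}"
    using assms by (rule abstract_point_St_pullback)
  show "nbhd (St_opens ast) {x. Op ast x \<in> P} \<subseteq> P"
  proof
    fix A assume "A \<in> nbhd (St_opens ast) {x. Op ast x \<in> P}"
    moreover then obtain x where "A = Op ast x"
      unfolding nbhd_def St_opens_def by blast
    ultimately show "A \<in> P"
      using Op_in_nbhd_St_iff[OF F] by simp
  qed
  show "P \<subseteq> nbhd (St_opens ast) {x. Op ast x \<in> P}"
  proof
    fix A assume "A \<in> P"
    moreover have "P \<subseteq> St_opens ast"
      using assms unfolding abstract_point_on_def by simp
    ultimately obtain x where "A = Op ast x"
      unfolding St_opens_def by blast
    with \<open>A \<in> P\<close> show "A \<in> nbhd (St_opens ast) {x. Op ast x \<in> P}"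
      using Op_in_nbhd_St_iff[OF F] by simp
  qed
qed

theorem proposition7p15:
  fixes ast :: "'a::complete_lattice \<Rightarrow> 'a \<Rightarrow> bool"
  assumes "semiframe ast"
  shows "sober (St_points ast) (St_opens ast)"
  unfolding sober_def bij_betw_def
proof (intro conjI inj_on_nbhd_St subset_antisym subsetI)
  fix N assume "N \<in> nbhd (St_opens ast) ` St_points ast"
  then obtain F where F: "abstract_point ast F" and N: "N = nbhd (St_opens ast) F"
    unfolding St_points_def by blast
  obtain x where "x \<in> F"
    using F unfolding abstract_point_iff by blast
  with F have "F \<in> Op ast x"
    unfolding Op_def by blast
  then show "N \<in> {P. abstract_point_on (St_opens ast) (\<subseteq>) Union (\<lambda>A B. A \<inter> B \<noteq> {}) P}"
    unfolding N by (simp add: abstract_point_nbhd[OF Op_in_St_opens])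
next
  fix P assume "P \<in> {P. abstract_point_on (St_opens ast) (\<subseteq>) Union (\<lambda>A B. A \<inter> B \<noteq> {}) P}"
  then have P: "abstract_point_on (St_opens ast) (\<subseteq>) Union (\<lambda>A B. A \<inter> B \<noteq> {}) P"
    by simp
  show "P \<in> nbhd (St_opens ast) ` St_points ast"
  proof (rule image_eqI)
    show "P = nbhd (St_opens ast) {x. Op ast x \<in> P}"
      using nbhd_St_pullback[OF P] by simp
    show "{x. Op ast x \<in> P} \<in> St_points ast"
      using abstract_point_St_pullback[OF P] by (simp add: St_points_def)
  qed
qed

end
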